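(* Let $m$ be odd and $L=L'$. For $a\in\mathcal{R}$ the Lee weight of $ev(a)=(Tr(ax))_{x\in L'}$ is: (a) $0$ if $a=0$; (b) $3^{3m}$ if $a=(u-1)^2a_3$ with $a_3\in\mathbb{F}_{3^m}^*$; (c) $3^{3m}-3^{2m}$ if $a\in\mathcal{R}\setminus\langle (u-1)^2\rangle$.
   Context: Let $R=\mathbb{F}_3[u]/(u^3-1)$ and $\mathcal{R}=\mathbb{F}_{3^m}[u]/(u^3-1)=\mathbb{F}_{3^m}+u\mathbb{F}_{3^m}+u^2\mathbb{F}_{3^m}$. Every element of $\mathcal{R}$ is uniquely $x_1+x_2(u-1)+x_3(u-1)^2$ with $x_i\in\mathbb{F}_{3^m}$; units are those with $x_1\neq0$. $\langle (u-1)^2\rangle=\{(u-1)^2a_3:a_3\in\mathbb{F}_{3^m}\}$. $Tr:\mathcal{R}\to R$ is $Tr(a+ub+u^2c)=tr(a)+u\,tr(b)+u^2tr(c)$, with $tr$ the absolute trace $\mathbb{F}_{3^m}\to\mathbb{F}_3$. $\mathcal{Q}$ denotes the nonzero squares of $\mathbb{F}_{3^m}$; $L'=\{x_1+x_2(u-1)+x_3(u-1)^2:x_1\in\mathcal{Q},x_2,x_3\in\mathbb{F}_{3^m}\}$. The Gray map $\phi:R\to\mathbb{F}_3^3$ is $\phi(a'+ub'+u^2c')=(a',b',c')$, extended coordinatewise to $R^n\to\mathbb{F}_3^{3n}$; the Lee weight $w_L(v)$ of $v\in R^n$ is the Hamming weight of $\phi(v)$. *)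

theory Defs
  imports Main
begin

text \<open>The field F_{3^m} is modelled by a finite field type 'a with CARD('a) = 3^m.
An element a + u b + u^2 c of R = F_{3^m}[u]/(u^3-1) is the triple (a, b, c).\<close>

type_synonym 'a uring = "'a \<times> 'a \<times> 'a"

definition rmul :: "'a::comm_ring_1 uring \<Rightarrow> 'a uring \<Rightarrow> 'a uring" where
  "rmul x y = (case x of (a, b, c) \<Rightarrow> case y of (a', b', c') \<Rightarrow>
     (a*a' + b*c' + c*b', a*b' + b*a' + c*c', a*c' + b*b' + c*a'))"

text \<open>The element x1 + x2 (u-1) + x3 (u-1)^2, expanded in the basis 1, u, u^2.\<close>
definition ufrom :: "'a::comm_ring_1 \<Rightarrow> 'a \<Rightarrow> 'a \<Rightarrow> 'a uring" where
  "ufrom x1 x2 x3 = (x1 - x2 + x3, x2 - 2*x3, x3)"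

text \<open>Absolute trace F_{3^m} \<rightarrow> F_3 (values lie in the prime subfield).\<close>
definition tr :: "nat \<Rightarrow> 'a::comm_ring_1 \<Rightarrow> 'a" where
  "tr m x = (\<Sum>i<m. x ^ (3 ^ i))"

definition Tr :: "nat \<Rightarrow> 'a::comm_ring_1 uring \<Rightarrow> 'a uring" where
  "Tr m x = (case x of (a, b, c) \<Rightarrow> (tr m a, tr m b, tr m c))"

definition Qsq :: "'a::comm_ring_1 set" where
  "Qsq = {y. y \<noteq> 0 \<and> (\<exists>z. y = z^2)}"

definition Lprime :: "'a::comm_ring_1 uring set" where
  "Lprime = {ufrom x1 x2 x3 | x1 x2 x3. x1 \<in> Qsq}"

text \<open>Lee weight of an element of R = F_3[u]/(u^3-1): Hamming weight of its Gray image
  (a', b', c'), i.e. the number of nonzero coordinates.\<close>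
definition lee_wt1 :: "'a::zero uring \<Rightarrow> nat" where
  "lee_wt1 x = (case x of (a, b, c) \<Rightarrow>
     (if a \<noteq> 0 then 1 else 0) + (if b \<noteq> 0 then 1 else 0) + (if c \<noteq> 0 then 1 else 0))"

definition lee_wt :: "'i set \<Rightarrow> ('i \<Rightarrow> 'a::zero uring) \<Rightarrow> nat" where
  "lee_wt I v = (\<Sum>i\<in>I. lee_wt1 (v i))"

definition ev :: "nat \<Rightarrow> 'a::comm_ring_1 uring \<Rightarrow> 'a uring \<Rightarrow> 'a uring" where
  "ev m a = (\<lambda>x. Tr m (rmul a x))"

definition ideal_u1sq :: "'a::comm_ring_1 uring set" where
  "ideal_u1sq = {ufrom 0 0 a3 | a3. True}"

end

theory Submission
  imports Defs "HOL-Computational_Algebra.Polynomial" "HOL-Computational_Algebra.Primes"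
begin

text \<open>
  In characteristic 3 the trace is additive and satisfies \<open>tr x ^ 3 = tr x\<close>, so it is a
  nonzero additive map onto \<open>F\<^sub>3\<close> and takes each value \<open>3 ^ (m - 1)\<close> times.
  For \<open>a = p + u q + u\<^sup>2 r\<close> and \<open>x = x\<^sub>1 + x\<^sub>2 (u - 1) + x\<^sub>3 (u - 1)\<^sup>2\<close>,
  the three coordinates of \<open>Tr (a x)\<close> are traces of linear forms in \<open>(x\<^sub>1, x\<^sub>2, x\<^sub>3)\<close>.
  Unless \<open>p = q = r\<close>, which in characteristic 3 means \<open>a \<in> \<langle>(u - 1)\<^sup>2\<rangle>\<close>, each form has
  a nonzero \<open>(x\<^sub>2, x\<^sub>3)\<close>-part, so for every \<open>x\<^sub>1\<close> its trace is nonzero on two thirds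
  of the \<open>(x\<^sub>2, x\<^sub>3)\<close>-plane; with \<open>2 |Q| = 3 ^ m - 1\<close> this gives \<open>3 ^ 3m - 3 ^ 2m\<close>.
  If \<open>a = (u - 1)\<^sup>2 a\<^sub>3 = a\<^sub>3 (1 + u + u\<^sup>2)\<close>, all three coordinates equal \<open>tr (a\<^sub>3 x\<^sub>1)\<close>.
  For odd \<open>m\<close>, \<open>-1\<close> is a non-square, so \<open>Q\<close> and \<open>-Q\<close> split the nonzero elements,
  and as \<open>y \<mapsto> tr (a\<^sub>3 y)\<close> is odd, exactly half of its \<open>2 \<cdot> 3 ^ (m - 1)\<close> non-zeros lie in \<open>Q\<close>.
\<close>

lemma of_nat_card_UNIV_eq_0: "of_nat (card (UNIV :: 'a :: {ring_1, finite} set)) = (0 :: 'a)"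
proof -
  have "(\<Sum>y\<in>UNIV. 1 + y) = (\<Sum>y\<in>UNIV. y :: 'a)"
    by (rule sum.reindex_bij_witness[where i = "\<lambda>y. y - 1" and j = "\<lambda>y. 1 + y"]) auto
  then show ?thesis by (simp add: sum.distrib)
qed

lemma CHAR_eq_if_card_eq_prime_power:
  assumes "card (UNIV :: 'a :: {field, finite} set) = p ^ m" and "prime p"
  shows "CHAR('a) = p"
proof -
  have "prime CHAR('a)"
    by (intro prime_CHAR_semidom finite_imp_CHAR_pos) simp
  moreover have "CHAR('a) dvd p ^ m"
    using of_nat_card_UNIV_eq_0[where 'a = 'a] assms(1) of_nat_eq_0_iff_char_dvd by metis
  ultimately show ?thesis
    using assms(2) by (metis prime_dvd_power primes_dvd_imp_eq)
qed

lemma CHAR_eq_3_if_card_eq_power: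
  "card (UNIV :: 'a :: {field, finite} set) = 3 ^ m \<Longrightarrow> CHAR('a) = 3"
  using CHAR_eq_if_card_eq_prime_power by fastforce

lemma two_neq_0_if_CHAR_eq_3: "CHAR('a :: comm_ring_1) = 3 \<Longrightarrow> (2 :: 'a) \<noteq> 0"
  using of_nat_eq_0_iff_char_dvd[where 'a = 'a and n = 2] by simp

lemma power3_odd_mod_4:
  assumes "odd m" shows "(3::nat) ^ m mod 4 = 3"
proof -
  obtain j where "m = 2 * j + 1"
    using assms by (rule oddE)
  then have "(3::nat) ^ m = 3 * 9 ^ j"
    by (simp add: power_mult)
  moreover have "(9::nat) ^ j mod 4 = 1"
    using power_mod[of "9::nat" 4 j] by simp
  ultimately show ?thesis
    by (simp add: mod_mult_right_eq[of 3, symmetric])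
qed

text \<open>The library version \<open>finite_field_power_card_eq_same\<close> needs the type class
  \<open>finite_field\<close>, which the sort \<open>{field, finite}\<close> does not provide.\<close>

lemma finite_field_power_card_eq_self:
  fixes x :: "'a :: {field, finite}"
  shows "x ^ card (UNIV :: 'a set) = x"
proof (cases "x = 0")
  case False
  let ?U = "UNIV - {0 :: 'a}"
  have "(\<Prod>y\<in>?U. x * y) = (\<Prod>y\<in>?U. y)"
    by (rule prod.reindex_bij_witness[where i = "\<lambda>y. y / x" and j = "\<lambda>y. x * y"])
      (use False in auto)
  moreover have "(\<Prod>y\<in>?U. x * y) = x ^ card ?U * (\<Prod>y\<in>?U. y)"
    by (simp add: prod.distrib)
  moreover have "(\<Prod>y\<in>?U. y) \<noteq> 0"
    by simp
  ultimately have power_card_U: "x ^ card ?U = 1"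
    by simp
  have "card (UNIV :: 'a set) = Suc (card ?U)"
    using finite_UNIV_card_ge_0[where 'a = 'a] by (simp add: card_Diff_singleton)
  then show ?thesis
    by (simp only: power_Suc power_card_U mult_1_right)
qed (simp add: finite_UNIV_card_ge_0)

lemma card_fibre_eq_card_kernel:
  fixes f :: "'a :: ab_group_add \<Rightarrow> 'b :: ab_group_add"
  assumes additive: "\<And>x y. f (x + y) = f x + f y"
  shows "card {x. f x = f x0} = card {x. f x = 0}"
proof -
  have "{x. f x = f x0} = (\<lambda>y. y + x0) ` {x. f x = 0}"
  proof (intro set_eqI iffI)
    fix x assume "x \<in> {x. f x = f x0}"
    moreover have "f x = f (x - x0) + f x0" using additive[of "x - x0" x0] by simp
    ultimately show "x \<in> (\<lambda>y. y + x0) ` {x. f x = 0}"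
      by (intro rev_image_eqI[of "x - x0"]) auto
  qed (auto simp: additive)
  then show ?thesis by (simp add: card_image)
qed

lemma tr_add:
  assumes "CHAR('a :: comm_ring_1) = 3"
  shows "tr m (x + y) = tr m x + tr m (y :: 'a)"
proof -
  have "(x + y) ^ 3 ^ i = x ^ 3 ^ i + y ^ 3 ^ i" for i
    using freshmans_dream'[where 'a = 'a and m = "3 ^ i" and n = i] assms by simp
  then show ?thesis by (simp add: tr_def sum.distrib)
qed

lemma tr_uminus: "tr m (- x) = - tr m (x :: 'a :: comm_ring_1)"
  by (simp add: tr_def sum_negf)

lemma tr_zero: "tr m (0 :: 'a :: comm_ring_1) = 0"
  by (simp add: tr_def zero_power)

lemma tr_power3:
  fixes x :: "'a :: {field, finite}"
  assumes card: "card (UNIV :: 'a set) = 3 ^ m"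
  shows "tr m x ^ 3 = tr m x"
proof -
  have char: "CHAR('a) = 3"
    using CHAR_eq_3_if_card_eq_power[OF card] .
  have "tr m x ^ 3 = (\<Sum>i<m. (x ^ 3 ^ i) ^ 3)"
    unfolding tr_def by (rule freshmans_dream_sum) (simp_all add: char)
  also have "\<dots> = (\<Sum>i<m. x ^ 3 ^ Suc i)"
    by (simp add: power_mult[symmetric] mult.commute)
  also have "\<dots> = (\<Sum>i<m. x ^ 3 ^ i)"
    using sum.lessThan_Suc_shift[of "\<lambda>i. x ^ 3 ^ i" m]
      finite_field_power_card_eq_self[of x, unfolded card] by simp
  finally show ?thesis unfolding tr_def .
qed

lemma tr_cases:
  fixes x :: "'a :: {field, finite}"
  assumes "card (UNIV :: 'a set) = 3 ^ m"
  shows "tr m x = 0 \<or> tr m x = 1 \<or> tr m x = -1"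
proof -
  have "tr m x * (tr m x - 1) * (tr m x + 1) = tr m x ^ 3 - tr m x"
    by (simp add: algebra_simps power3_eq_cube)
  then show ?thesis
    using tr_power3[OF assms] by (auto simp: eq_neg_iff_add_eq_0)
qed

lemma ex_tr_neq_0:
  assumes card: "card (UNIV :: 'a :: {field, finite} set) = 3 ^ m" and "0 < m"
  shows "\<exists>x :: 'a. tr m x \<noteq> 0"
proof (rule ccontr)
  assume tr_vanishes: "\<nexists>x :: 'a. tr m x \<noteq> 0"
  define P where "P = (\<Sum>i<m. monom (1 :: 'a) (3 ^ i))"
  have "poly P x = tr m x" for x
    by (simp add: P_def tr_def poly_sum poly_monom)
  then have roots: "{x. poly P x = 0} = UNIV"
    using tr_vanishes by auto
  have "coeff P (3 ^ (m - 1)) = 1"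
    using \<open>0 < m\<close> by (simp add: P_def coeff_sum)
  then have "card {x. poly P x = 0} \<le> degree P"
    by (intro card_poly_roots_bound) auto
  also have "degree P \<le> 3 ^ (m - 1)"
    unfolding P_def
    by (intro degree_sum_le order.trans[OF degree_monom_le]) (auto intro: power_increasing)
  also have "\<dots> < 3 ^ m"
    using \<open>0 < m\<close> by simp
  finally show False
    using roots card by simp
qed

lemma card_tr_eq_0:
  assumes card: "card (UNIV :: 'a :: {field, finite} set) = 3 ^ m" and "0 < m"
  shows "3 * card {x :: 'a. tr m x = 0} = 3 ^ m"
proof -
  have char: "CHAR('a) = 3"
    using CHAR_eq_3_if_card_eq_power[OF card] .
  have one_neq_minus_one: "(1 :: 'a) \<noteq> -1"
    using two_neq_0_if_CHAR_eq_3[OF char] by (metis eq_neg_iff_add_eq_0 one_add_one)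
  obtain x1 :: 'a where "tr m x1 \<noteq> 0"
    using ex_tr_neq_0[OF assms] by blast
  then have "tr m x1 = 1 \<or> tr m (- x1) = 1"
    using tr_cases[OF card, of x1] by (auto simp: tr_uminus)
  then obtain x0 :: 'a where x0: "tr m x0 = 1"
    by blast
  define F where "F t = {x :: 'a. tr m x = t}" for t
  have card_F: "card (F (tr m x)) = card (F 0)" for x
    unfolding F_def by (rule card_fibre_eq_card_kernel) (rule tr_add[OF char])
  have fibres: "card (F 1) = card (F 0)" "card (F (- 1)) = card (F 0)"
    using card_F[of x0] card_F[of "- x0"] by (simp_all only: x0 tr_uminus)
  have "UNIV = F 0 \<union> F 1 \<union> F (- 1)"
    using tr_cases[OF card] by (auto simp: F_def)
  then have "card (UNIV :: 'a set) = card (F 0 \<union> F 1 \<union> F (- 1))"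
    by (rule arg_cong)
  also have "\<dots> = card (F 0 \<union> F 1) + card (F (- 1))"
    by (rule card_Un_disjoint) (use one_neq_minus_one in \<open>auto simp: F_def\<close>)
  also have "card (F 0 \<union> F 1) = card (F 0) + card (F 1)"
    by (rule card_Un_disjoint) (auto simp: F_def)
  finally show ?thesis
    using card fibres by (simp add: F_def)
qed

lemma card_tr_neq_0:
  assumes card: "card (UNIV :: 'a :: {field, finite} set) = 3 ^ m" and "0 < m"
  shows "3 * card {x :: 'a. tr m x \<noteq> 0} = 2 * 3 ^ m"
proof -
  have "{x :: 'a. tr m x \<noteq> 0} = UNIV - {x. tr m x = 0}"
    by blast
  then have "card {x :: 'a. tr m x \<noteq> 0} = card (UNIV :: 'a set) - card {x :: 'a. tr m x = 0}"
    by (simp only:) (rule card_Diff_subset; simp)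
  then show ?thesis
    using card_tr_eq_0[OF assms] card by simp
qed

lemma card_Qsq:
  assumes "(2 :: 'a :: {field, finite}) \<noteq> 0"
  shows "2 * card (Qsq :: 'a set) = card (UNIV :: 'a set) - 1"
proof -
  have square_roots: "card {z :: 'a. z ^ 2 = s} = 2" if "s \<in> Qsq" for s
  proof -
    obtain w where w: "s = w ^ 2" "w \<noteq> 0"
      using \<open>s \<in> Qsq\<close> by (auto simp: Qsq_def)
    then have "{z. z ^ 2 = s} = {w, - w}"
      by (auto simp: power2_eq_iff)
    moreover have "w \<noteq> - w"
      using w assms by (metis eq_neg_iff_add_eq_0 mult_2 no_zero_divisors)
    ultimately show ?thesis by simp
  qed
  have "UNIV - {0 :: 'a} = (\<Union>s\<in>Qsq. {z. z ^ 2 = s})"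
    by (auto simp: Qsq_def)
  then have "card (UNIV - {0 :: 'a}) = (\<Sum>s\<in>Qsq. card {z :: 'a. z ^ 2 = s})"
    by (simp only:) (rule card_UN_disjoint; auto)
  then show ?thesis
    using square_roots by (simp add: card_Diff_singleton)
qed

lemma minus_one_notin_Qsq:
  assumes "card (UNIV :: 'a :: {field, finite} set) mod 4 = 3" and "(2 :: 'a) \<noteq> 0"
  shows "(- 1 :: 'a) \<notin> Qsq"
proof
  assume "(- 1 :: 'a) \<in> Qsq"
  then obtain z :: 'a where "- 1 = z ^ 2"
    by (auto simp: Qsq_def)
  then have z: "z ^ 2 = - 1"
    by (rule sym)
  define k where "k = card (UNIV :: 'a set) div 4"
  have k: "card (UNIV :: 'a set) = 2 * (2 * k + 1) + 1"
    using div_mult_mod_eq[of "card (UNIV :: 'a set)" 4] assms(1) unfolding k_def by presburger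
  have "z = z ^ (2 * (2 * k + 1) + 1)"
    using finite_field_power_card_eq_self[of z] unfolding k by (rule sym)
  also have "\<dots> = (z ^ 2) ^ (2 * k + 1) * z"
    by (simp only: power_add power_mult power_one_right)
  also have "\<dots> = - z"
    unfolding z by simp
  finally have "2 * z = 0"
    by (simp only: mult_2 eq_neg_iff_add_eq_0)
  then show False
    using z assms(2) by simp
qed

lemma Qsq_Int_uminus_Qsq:
  assumes "(- 1 :: 'a :: field) \<notin> Qsq"
  shows "Qsq \<inter> uminus ` Qsq = ({} :: 'a set)"
proof (rule ccontr)
  assume "Qsq \<inter> uminus ` Qsq \<noteq> ({} :: 'a set)"
  then obtain z w :: 'a where zw: "- (w ^ 2) = z ^ 2" and "w \<noteq> 0"
    by (auto simp: Qsq_def)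
  then have "(z / w) ^ 2 = - 1"
    by (simp add: power_divide zw[symmetric])
  then have "(- 1 :: 'a) \<in> Qsq"
    unfolding Qsq_def by (auto intro: exI[of _ "z / w"])
  with assms show False ..
qed

lemma Qsq_Un_uminus_Qsq:
  assumes "(2 :: 'a :: {field, finite}) \<noteq> 0" and "(- 1 :: 'a) \<notin> Qsq"
  shows "Qsq \<union> uminus ` Qsq = UNIV - {0 :: 'a}"
proof (rule card_subset_eq)
  show "Qsq \<union> uminus ` Qsq \<subseteq> UNIV - {0 :: 'a}"
    by (auto simp: Qsq_def)
  have "card (Qsq \<union> uminus ` Qsq :: 'a set) = card (Qsq :: 'a set) + card (uminus ` (Qsq :: 'a set))"
    by (rule card_Un_disjoint) (use Qsq_Int_uminus_Qsq[OF assms(2)] in auto)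
  then show "card (Qsq \<union> uminus ` Qsq :: 'a set) = card (UNIV - {0 :: 'a})"
    using card_Qsq[OF assms(1)] by (simp add: card_image card_Diff_singleton)
qed simp

text \<open>\<open>Q\<close> and \<open>-Q\<close> partition the nonzero elements, and negation swaps them while
  preserving \<open>T\<close>.\<close>

lemma card_Qsq_Int_symmetric:
  fixes T :: "'a :: {field, finite} set"
  assumes "(2 :: 'a) \<noteq> 0" and "(- 1 :: 'a) \<notin> Qsq"
    and "0 \<notin> T" and symmetric: "\<And>x. x \<in> T \<Longrightarrow> - x \<in> T"
  shows "2 * card (Qsq \<inter> T) = card T"
proof -
  have "T = (Qsq \<inter> T) \<union> (uminus ` Qsq \<inter> T)"
    using Qsq_Un_uminus_Qsq[OF assms(1,2)] \<open>0 \<notin> T\<close> by blast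
  moreover have "(Qsq \<inter> T) \<inter> (uminus ` Qsq \<inter> T) = {}"
    using Qsq_Int_uminus_Qsq[OF assms(2)] by blast
  ultimately have "card T = card (Qsq \<inter> T) + card (uminus ` Qsq \<inter> T)"
    by (metis card_Un_disjoint finite)
  also have "uminus ` Qsq \<inter> T = uminus ` (Qsq \<inter> T)"
    using symmetric by (auto intro!: image_eqI) (metis minus_minus)
  finally show ?thesis
    by (simp add: card_image)
qed

lemma card_Qsq_Int_tr_neq_0:
  fixes c :: "'a :: {field, finite}"
  assumes card: "card (UNIV :: 'a set) = 3 ^ m" and "odd m" and "c \<noteq> 0"
  shows "3 * card (Qsq \<inter> {y. tr m (c * y) \<noteq> 0}) = 3 ^ m"
proof -
  define T where "T = {y. tr m (c * y) \<noteq> 0}"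
  have two: "(2 :: 'a) \<noteq> 0"
    using two_neq_0_if_CHAR_eq_3[OF CHAR_eq_3_if_card_eq_power[OF card]] .
  have "(- 1 :: 'a) \<notin> Qsq"
    using minus_one_notin_Qsq[OF _ two] power3_odd_mod_4[OF \<open>odd m\<close>] card by simp
  then have "2 * card (Qsq \<inter> T) = card T"
    using two by (intro card_Qsq_Int_symmetric) (auto simp: T_def tr_zero tr_uminus)
  also have "card T = card {x :: 'a. tr m x \<noteq> 0}"
  proof -
    have "T = (\<lambda>x. x / c) ` {x. tr m x \<noteq> 0}"
      using \<open>c \<noteq> 0\<close> by (auto simp: T_def image_iff intro!: exI[of _ "c * _"])
    then show ?thesis
      using \<open>c \<noteq> 0\<close> by (simp add: card_image inj_on_def)
  qed
  finally have "2 * card (Qsq \<inter> T) = card {x :: 'a. tr m x \<noteq> 0}" .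
  with card_tr_neq_0[OF card] \<open>odd m\<close> show ?thesis
    by (simp add: T_def odd_pos)
qed

lemma sum_affine_reindex:
  fixes f :: "'a :: field \<Rightarrow> 'b :: comm_monoid_add"
  assumes "d \<noteq> 0"
  shows "(\<Sum>y\<in>UNIV. f (c + d * y)) = (\<Sum>x\<in>UNIV. f x)"
  by (rule sum.reindex_bij_witness[where i = "\<lambda>x. (x - c) / d" and j = "\<lambda>y. c + d * y"])
    (use assms in auto)

lemma sum_sum_linear_form:
  fixes f :: "'a :: field \<Rightarrow> 'b :: semiring_1"
  assumes "b \<noteq> 0 \<or> g \<noteq> 0"
  shows "(\<Sum>x2\<in>UNIV. \<Sum>x3\<in>UNIV. f (c + b * x2 + g * x3))
    = of_nat (card (UNIV :: 'a set)) * (\<Sum>x\<in>UNIV. f x)"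
proof (cases "g = 0")
  case True
  with assms have "b \<noteq> 0"
    by simp
  with True show ?thesis
    by (simp add: sum_affine_reindex sum_distrib_left[symmetric])
next
  case False
  then show ?thesis
    using sum_affine_reindex[of g f] by simp
qed

lemma lee_wt_Lprime:
  fixes v :: "'a :: comm_ring_1 uring \<Rightarrow> 'b :: zero uring"
  shows "lee_wt Lprime v = (\<Sum>x1\<in>Qsq. \<Sum>x2\<in>UNIV. \<Sum>x3\<in>UNIV. lee_wt1 (v (ufrom x1 x2 x3)))"
proof -
  define u where "u = (\<lambda>(x1, x2, x3). ufrom x1 x2 (x3 :: 'a))"
  have Lprime_image: "Lprime = u ` (Qsq \<times> UNIV \<times> UNIV)"
    unfolding Lprime_def
  proof (intro set_eqI iffI)
    fix y assume "y \<in> {ufrom x1 x2 x3 |x1 x2 x3. x1 \<in> (Qsq :: 'a set)}"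
    then obtain x1 x2 x3 where "y = ufrom x1 x2 x3" "x1 \<in> Qsq"
      by blast
    then show "y \<in> u ` (Qsq \<times> UNIV \<times> UNIV)"
      by (intro image_eqI[of _ _ "(x1, x2, x3)"]) (auto simp: u_def)
  qed (auto simp: u_def)
  have "inj u"
    by (auto simp: inj_on_def ufrom_def u_def)
  then have "lee_wt Lprime v = (\<Sum>x\<in>Qsq \<times> UNIV \<times> UNIV. lee_wt1 (v (u x)))"
    unfolding lee_wt_def
    by (rule sum.reindex_cong[OF inj_on_subset[OF _ subset_UNIV] Lprime_image]) simp
  then show ?thesis
    by (simp add: u_def sum.cartesian_product split_def)
qed

lemma rmul_ufrom:
  "rmul (p, q, r) (ufrom x1 x2 x3) =
    (p * x1 + (r - p) * x2 + (p + q - 2 * r) * x3,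
     q * x1 + (p - q) * x2 + (q + r - 2 * p) * x3,
     r * x1 + (q - r) * x2 + (p + r - 2 * q) * (x3 :: 'a :: comm_ring_1))"
  by (simp add: rmul_def ufrom_def algebra_simps)

lemma lee_wt_ev_Lprime:
  fixes p q r :: "'a :: comm_ring_1"
  shows "lee_wt Lprime (ev m (p, q, r)) = (\<Sum>x1\<in>Qsq. \<Sum>x2\<in>UNIV. \<Sum>x3\<in>UNIV.
      of_bool (tr m (p * x1 + (r - p) * x2 + (p + q - 2 * r) * x3) \<noteq> 0)
    + of_bool (tr m (q * x1 + (p - q) * x2 + (q + r - 2 * p) * x3) \<noteq> 0)
    + of_bool (tr m (r * x1 + (q - r) * x2 + (p + r - 2 * q) * x3) \<noteq> 0))"
  by (simp add: lee_wt_Lprime ev_def rmul_ufrom Tr_def lee_wt1_def of_bool_def)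

lemma lee_wt_ev_0: "lee_wt Lprime (ev m (0, 0, 0 :: 'a :: comm_ring_1)) = 0"
  by (simp add: lee_wt_ev_Lprime tr_zero)

lemma lee_wt_ev_diagonal:
  fixes t :: "'a :: {field, finite}"
  assumes card: "card (UNIV :: 'a set) = 3 ^ m" and "odd m" and "t \<noteq> 0"
  shows "lee_wt Lprime (ev m (t, t, t)) = 3 ^ (3 * m)"
proof -
  have "lee_wt Lprime (ev m (t, t, t))
      = card (UNIV :: 'a set) ^ 2 * (3 * card (Qsq \<inter> {y. tr m (t * y) \<noteq> 0}))"
    by (simp add: lee_wt_ev_Lprime power2_eq_square sum.distrib sum_distrib_left[symmetric] mult_ac)
  also have "\<dots> = 3 ^ (3 * m)"
    using card_Qsq_Int_tr_neq_0[OF card \<open>odd m\<close> \<open>t \<noteq> 0\<close>] card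
    by (simp add: power_mult[symmetric] power_add[symmetric])
  finally show ?thesis .
qed

lemma lee_wt_ev_off_diagonal:
  fixes p q r :: "'a :: {field, finite}"
  assumes card: "card (UNIV :: 'a set) = 3 ^ m" and "0 < m" and "\<not> (p = q \<and> q = r)"
  shows "lee_wt Lprime (ev m (p, q, r)) = 3 ^ (3 * m) - 3 ^ (2 * m)"
proof -
  define X where "X = card (Qsq :: 'a set)"
  define N where "N = card {x :: 'a. tr m x \<noteq> 0}"
  define c :: nat where "c = 3 ^ m"
  have squares: "2 * X = c - 1"
    using card_Qsq[OF two_neq_0_if_CHAR_eq_3[OF CHAR_eq_3_if_card_eq_power[OF card]]] card
    unfolding X_def c_def by simp
  have nonzero_traces: "3 * N = 2 * c"
    using card_tr_neq_0[OF card \<open>0 < m\<close>] unfolding N_def c_def .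
  have linear_form: "(\<Sum>x2\<in>UNIV. \<Sum>x3\<in>UNIV. of_bool (tr m (e + b * x2 + g * x3) \<noteq> 0))
      = c * N" if "b \<noteq> 0 \<or> g \<noteq> 0" for b g e :: 'a
    using sum_sum_linear_form[OF that, of "\<lambda>z. of_bool (tr m z \<noteq> 0) :: nat" e] card
    by (simp add: N_def c_def)
  have "r - p \<noteq> 0 \<or> p + q - 2 * r \<noteq> 0" "p - q \<noteq> 0 \<or> q + r - 2 * p \<noteq> 0"
    "q - r \<noteq> 0 \<or> p + r - 2 * q \<noteq> 0"
    using assms(3) by (auto simp: algebra_simps mult_2)
  then have "lee_wt Lprime (ev m (p, q, r)) = X * (c * N) + X * (c * N) + X * (c * N)"
    by (simp only: lee_wt_ev_Lprime sum.distrib linear_form sum_constant of_nat_id X_def)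
  also have "\<dots> = (c - 1) * c * c"
  proof -
    have "2 * (X * (c * N) + X * (c * N) + X * (c * N)) = (2 * X) * c * (3 * N)"
      by (simp add: algebra_simps)
    also have "\<dots> = 2 * ((c - 1) * c * c)"
      unfolding squares nonzero_traces by (simp only: mult_ac)
    finally show ?thesis
      by (rule mult_left_cancel[THEN iffD1, rotated]) simp
  qed
  also have "\<dots> = 3 ^ (3 * m) - 3 ^ (2 * m)"
  proof -
    have "(3 :: nat) ^ (3 * m) = c * c * c" "(3 :: nat) ^ (2 * m) = c * c"
      by (simp_all add: c_def power_mult[symmetric] power_add[symmetric] mult_ac)
    then show ?thesis
      by (simp add: diff_mult_distrib)
  qed
  finally show ?thesis .
qed

lemma ufrom_0_0_eq_if_CHAR_eq_3:
  assumes "CHAR('a :: comm_ring_1) = 3"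
  shows "ufrom 0 0 t = (t, t, t :: 'a)"
proof -
  have "(3 :: 'a) = 0"
    using of_nat_CHAR[where 'a = 'a] assms by simp
  moreover have "- 2 * t = t - 3 * t"
    by (simp add: algebra_simps)
  ultimately have "- 2 * t = t"
    by simp
  then show ?thesis
    by (simp add: ufrom_def)
qed

theorem theorem5p4:
  fixes m :: nat and a :: "'a::{field,finite} uring"
  assumes card: "card (UNIV :: 'a set) = 3 ^ m"
    and odd_m: "odd m"
  shows "(a = (0, 0, 0) \<longrightarrow> lee_wt Lprime (ev m a) = 0)
    \<and> (\<forall>a3. a3 \<noteq> 0 \<and> a = ufrom 0 0 a3 \<longrightarrow> lee_wt Lprime (ev m a) = 3 ^ (3 * m))
    \<and> (a \<notin> ideal_u1sq \<longrightarrow> lee_wt Lprime (ev m a) = 3 ^ (3 * m) - 3 ^ (2 * m))"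
proof (intro conjI)
  have diagonal: "ufrom 0 0 t = (t, t, t)" for t :: 'a
    using ufrom_0_0_eq_if_CHAR_eq_3[OF CHAR_eq_3_if_card_eq_power[OF card]] .
  show "a = (0, 0, 0) \<longrightarrow> lee_wt Lprime (ev m a) = 0"
    by (simp add: lee_wt_ev_0)
  show "\<forall>a3. a3 \<noteq> 0 \<and> a = ufrom 0 0 a3 \<longrightarrow> lee_wt Lprime (ev m a) = 3 ^ (3 * m)"
    using lee_wt_ev_diagonal[OF card odd_m] by (simp add: diagonal)
  obtain p q r where a: "a = (p, q, r)"
    by (cases a)
  show "a \<notin> ideal_u1sq \<longrightarrow> lee_wt Lprime (ev m a) = 3 ^ (3 * m) - 3 ^ (2 * m)"
  proof
    assume "a \<notin> ideal_u1sq"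
    then have "\<not> (p = q \<and> q = r)"
      by (auto simp: a ideal_u1sq_def diagonal)
    then show "lee_wt Lprime (ev m a) = 3 ^ (3 * m) - 3 ^ (2 * m)"
      unfolding a using lee_wt_ev_off_diagonal[OF card odd_pos[OF odd_m]] by blast
  qed
qed

end
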